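(* Let $F_n:[0,+\infty)\to\mathcal L(X,X)$, $n\ge1$, be continuous functions such that $\|F_n(t)\|_{\mathcal L(X,X)}\le R_F$ for all $t\ge0$, $n\ge1$ and some $R_F>0$, and such that for every $T>0$, $\int_0^tF_n(r)\,dr\to0$ in $\mathcal L(X,X)$ as $n\to+\infty$, uniformly with respect to $t\in[0,T]$. Then for every $T>0$, $$\lim_{n\to+\infty}\int_s^tF_n(r)S_0(r-s)\bar u\,dr=0\quad\text{in }X,$$ uniformly with respect to $\bar u$ in bounded subsets of $X$, $t\in[0,T]$ and $s\in[0,t]$.
   Context: $X$ is a Banach space. $A_0$ is a linear operator in $X$ such that $-A_0$ generates an analytic $C_0$-semigroup $\{S_0(t)\}_{t\ge0}$ on $X$ satisfying $\|S_0(t)\|_{\mathcal L(X,X)}\le M_0$ for $t\ge0$ and $\|A_0S_0(t)\|_{\mathcal L(X,X)}\le M_1t^{-1}$ for $t>0$, for some constants $M_0,M_1>0$. *)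

theory Defs
  imports "HOL-Analysis.Analysis"
begin

definition C0_semigroup :: "(real \<Rightarrow> 'a::banach \<Rightarrow>\<^sub>L 'a) \<Rightarrow> bool" where
  "C0_semigroup S \<longleftrightarrow>
     S 0 = id_blinfun \<and>
     (\<forall>t\<ge>0. \<forall>s\<ge>0. S (t + s) = S t o\<^sub>L S s) \<and>
     (\<forall>x. continuous_on {0..} (\<lambda>t. S t x))"

definition is_generator ::
  "(real \<Rightarrow> 'a::banach \<Rightarrow>\<^sub>L 'a) \<Rightarrow> ('a \<Rightarrow> 'a) \<Rightarrow> 'a set \<Rightarrow> bool" where
  "is_generator S G D \<longleftrightarrow>
     D = {x. \<exists>y. ((\<lambda>h. (S h x - x) /\<^sub>R h) \<longlongrightarrow> y) (at_right 0)} \<and>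
     (\<forall>x\<in>D. ((\<lambda>h. (S h x - x) /\<^sub>R h) \<longlongrightarrow> G x) (at_right 0))"

text \<open>Analytic (holomorphic) semigroup, in the real-Banach-space characterization
  (Pazy, Thm 2.5.2(d)): a uniformly bounded C0-semigroup which is differentiable for
  t > 0 (S t maps X into the domain of the generator) with
  norm (G S(t)) \<le> C / t for t > 0.\<close>
definition analytic_C0_semigroup ::
  "(real \<Rightarrow> 'a::banach \<Rightarrow>\<^sub>L 'a) \<Rightarrow> ('a \<Rightarrow> 'a) \<Rightarrow> 'a set \<Rightarrow> bool" where
  "analytic_C0_semigroup S G D \<longleftrightarrow>
     C0_semigroup S \<and> is_generator S G D \<and>
     (\<exists>M. \<forall>t\<ge>0. norm (S t) \<le> M) \<and>
     (\<forall>t>0. \<forall>x. S t x \<in> D) \<and>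
     (\<exists>C. \<forall>t>0. \<forall>x. norm (G (S t x)) \<le> C / t * norm x)"

end

theory Submission
  imports Defs
begin

text \<open>
  Split the integral at s + \<delta>. On [s, s + \<delta>] the integrand is bounded by R_F M0 |u|, so this
  piece is at most R_F M0 |u| \<delta>. On [s + \<delta>, t] integrate by parts against the primitive
  \<Phi>_n(r) = \<integral>_0^r F_n, which is uniformly small for large n: since S0(r) maps into the domain
  of A0 for r > 0, the map r \<mapsto> S0(r - s) u is differentiable there with derivative
  -A0 S0(r - s) u, of norm at most M1 |u| / \<delta>. So this piece is at most
  sup |\<Phi>_n| |u| (2 M0 + T M1 / \<delta>). Fix \<delta> first, then take n large.
\<close>

lemma has_vector_derivative_at_iff_difference_quotient:
  fixes f :: "real \<Rightarrow> 'a::real_normed_vector"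
  shows "(f has_vector_derivative D) (at x) \<longleftrightarrow> ((\<lambda>y. (f y - f x) /\<^sub>R (y - x)) \<longlongrightarrow> D) (at x)"
proof -
  have "norm ((f y - f x) /\<^sub>R (y - x) - D) = norm (f y - f x - (y - x) *\<^sub>R D) / norm (y - x)"
    if "y \<noteq> x" for y
  proof -
    have "f y - f x - (y - x) *\<^sub>R D = (y - x) *\<^sub>R ((f y - f x) /\<^sub>R (y - x) - D)"
      using that by (simp add: scaleR_right_diff_distrib)
    then show ?thesis using that by simp
  qed
  then have "((\<lambda>y. norm ((f y - f x) /\<^sub>R (y - x) - D)) \<longlongrightarrow> 0) (at x) \<longleftrightarrow>
             ((\<lambda>y. norm (f y - f x - (y - x) *\<^sub>R D) / norm (y - x)) \<longlongrightarrow> 0) (at x)"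
    by (intro filterlim_cong) (auto simp: eventually_at_filter)
  then show ?thesis
    unfolding has_vector_derivative_def has_derivative_iff_norm tendsto_norm_zero_iff
    by (simp add: bounded_linear_scaleR_left LIM_zero_iff)
qed

lemma has_vector_derivative_at_from_one_sided:
  fixes f :: "real \<Rightarrow> 'a::real_normed_vector"
  assumes right: "((\<lambda>h. (f (x + h) - f x) /\<^sub>R h) \<longlongrightarrow> D) (at_right 0)"
    and left: "((\<lambda>h. (f x - f (x - h)) /\<^sub>R h) \<longlongrightarrow> D) (at_right 0)"
  shows "(f has_vector_derivative D) (at x)"
proof -
  define q where "q y = (f y - f x) /\<^sub>R (y - x)" for y
  have "(q \<longlongrightarrow> D) (at_right x)"
    unfolding filterlim_at_right_to_0[of q _ x] using right by (simp add: q_def add.commute)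
  moreover have "q (x - h) = (f x - f (x - h)) /\<^sub>R h" for h
  proof -
    have "q (x - h) = - ((f (x - h) - f x) /\<^sub>R h)" by (simp add: q_def)
    then show ?thesis by (simp add: scaleR_diff_right)
  qed
  then have "(q \<longlongrightarrow> D) (at_left x)"
    unfolding filterlim_at_left_to_right filterlim_at_right_to_0[of _ _ "- x"] using left by simp
  ultimately show ?thesis
    unfolding has_vector_derivative_at_iff_difference_quotient q_def[symmetric]
    using filterlim_at_split by blast
qed

lemma C0_semigroup_apply_add:
  assumes "C0_semigroup S" "a \<ge> 0" "b \<ge> 0"
  shows "S a (S b x) = S (a + b) x"
  using assms unfolding C0_semigroup_def by auto

lemma generator_semigroup_commute:
  assumes C0: "C0_semigroup S" and gen: "is_generator S G D"
    and "w \<in> D" "a \<ge> 0" "S a w \<in> D"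
  shows "G (S a w) = S a (G w)"
proof -
  have "((\<lambda>h. (S h w - w) /\<^sub>R h) \<longlongrightarrow> G w) (at_right 0)"
    using gen \<open>w \<in> D\<close> unfolding is_generator_def by blast
  then have "((\<lambda>h. S a ((S h w - w) /\<^sub>R h)) \<longlongrightarrow> S a (G w)) (at_right 0)"
    by (rule blinfun.tendsto[OF tendsto_const])
  moreover have "\<forall>\<^sub>F h in at_right 0. S a ((S h w - w) /\<^sub>R h) = (S h (S a w) - S a w) /\<^sub>R h"
    using eventually_at_right_less
  proof (rule eventually_mono)
    fix h :: real assume "h > 0"
    then show "S a ((S h w - w) /\<^sub>R h) = (S h (S a w) - S a w) /\<^sub>R h"
      using C0_semigroup_apply_add[OF C0, of a h w] C0_semigroup_apply_add[OF C0, of h a w] \<open>a \<ge> 0\<close>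
      by (simp add: blinfun.scaleR_right blinfun.diff_right add.commute)
  qed
  ultimately have "((\<lambda>h. (S h (S a w) - S a w) /\<^sub>R h) \<longlongrightarrow> S a (G w)) (at_right 0)"
    by (rule Lim_transform_eventually)
  moreover have "((\<lambda>h. (S h (S a w) - S a w) /\<^sub>R h) \<longlongrightarrow> G (S a w)) (at_right 0)"
    using gen \<open>S a w \<in> D\<close> unfolding is_generator_def by blast
  ultimately show ?thesis
    using tendsto_unique[OF trivial_limit_at_right_real] by blast
qed

lemma semigroup_right_difference_quotient:
  assumes C0: "C0_semigroup S" and gen: "is_generator S G D"
    and "\<tau> \<ge> 0" "S \<tau> u \<in> D"
  shows "((\<lambda>h. (S (\<tau> + h) u - S \<tau> u) /\<^sub>R h) \<longlongrightarrow> G (S \<tau> u)) (at_right 0)"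
proof -
  have "((\<lambda>h. (S h (S \<tau> u) - S \<tau> u) /\<^sub>R h) \<longlongrightarrow> G (S \<tau> u)) (at_right 0)"
    using gen \<open>S \<tau> u \<in> D\<close> unfolding is_generator_def by blast
  moreover have "\<forall>\<^sub>F h in at_right 0. (S h (S \<tau> u) - S \<tau> u) /\<^sub>R h = (S (\<tau> + h) u - S \<tau> u) /\<^sub>R h"
    using eventually_at_right_less
    by (rule eventually_mono) (use C0_semigroup_apply_add[OF C0] \<open>\<tau> \<ge> 0\<close> in \<open>simp add: add.commute\<close>)
  ultimately show ?thesis
    by (rule Lim_transform_eventually)
qed

lemma semigroup_left_difference_quotient:
  assumes C0: "C0_semigroup S" and gen: "is_generator S G D"
    and bound: "\<forall>t\<ge>0. norm (S t) \<le> M" and "w \<in> D" "a > 0"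
  shows "((\<lambda>h. (S a w - S (a - h) w) /\<^sub>R h) \<longlongrightarrow> S a (G w)) (at_right 0)"
proof -
  define Q where "Q h = (S h w - w) /\<^sub>R h" for h
  have small: "\<forall>\<^sub>F h in at_right 0. h < a"
    using \<open>a > 0\<close> eventually_at_right_field by blast
  have "(Q \<longlongrightarrow> G w) (at_right 0)"
    using gen \<open>w \<in> D\<close> unfolding is_generator_def Q_def by blast
  then have "((\<lambda>h. norm (Q h - G w)) \<longlongrightarrow> 0) (at_right 0)"
    using LIM_zero tendsto_norm_zero by blast
  then have "((\<lambda>h. M * norm (Q h - G w)) \<longlongrightarrow> 0) (at_right 0)"
    by (rule tendsto_mult_right_zero)
  moreover have "\<forall>\<^sub>F h in at_right 0. norm (S (a - h) (Q h - G w)) \<le> M * norm (Q h - G w)"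
    using small
  proof (rule eventually_mono)
    fix h assume "h < a"
    then have "norm (S (a - h)) \<le> M" using bound by simp
    then show "norm (S (a - h) (Q h - G w)) \<le> M * norm (Q h - G w)"
      by (meson norm_blinfun norm_ge_zero mult_right_mono order_trans)
  qed
  ultimately have error: "((\<lambda>h. S (a - h) (Q h - G w)) \<longlongrightarrow> 0) (at_right 0)"
    by (rule Lim_null_comparison[rotated])
  have "continuous_on {0..} (\<lambda>t. S t (G w))"
    using C0 unfolding C0_semigroup_def by blast
  then have main: "((\<lambda>h. S (a - h) (G w)) \<longlongrightarrow> S a (G w)) (at_right 0)"
  proof (rule continuous_on_tendsto_compose)
    show "((\<lambda>h. a - h) \<longlongrightarrow> a) (at_right 0)"
      using tendsto_diff[OF tendsto_const[of a] tendsto_ident_at[of 0 "{0<..}"]] by simp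
    show "\<forall>\<^sub>F h in at_right 0. a - h \<in> {0..}"
      using small by (rule eventually_mono) simp
  qed (use \<open>a > 0\<close> in auto)
  have "\<forall>\<^sub>F h in at_right 0. S (a - h) (Q h - G w) + S (a - h) (G w) = (S a w - S (a - h) w) /\<^sub>R h"
    using eventually_conj[OF small eventually_at_right_less]
  proof (rule eventually_mono)
    fix h assume h: "h < a \<and> 0 < h"
    then have "S (a - h) (S h w) = S a w"
      using C0_semigroup_apply_add[OF C0, of "a - h" h w] by simp
    with h show "S (a - h) (Q h - G w) + S (a - h) (G w) = (S a w - S (a - h) w) /\<^sub>R h"
      by (simp add: Q_def blinfun.diff_right blinfun.scaleR_right)
  qed
  with tendsto_add[OF error main] show ?thesis
    by (simp add: Lim_transform_eventually)
qed

lemma semigroup_has_vector_derivative: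
  assumes C0: "C0_semigroup S" and gen: "is_generator S G D"
    and bound: "\<forall>t\<ge>0. norm (S t) \<le> M" and range: "\<forall>t>0. \<forall>x. S t x \<in> D" and "\<tau> > 0"
  shows "((\<lambda>r. S r u) has_vector_derivative G (S \<tau> u)) (at \<tau>)"
proof (rule has_vector_derivative_at_from_one_sided)
  show "((\<lambda>h. (S (\<tau> + h) u - S \<tau> u) /\<^sub>R h) \<longlongrightarrow> G (S \<tau> u)) (at_right 0)"
    using semigroup_right_difference_quotient[OF C0 gen] range \<open>\<tau> > 0\<close> by simp
  txt \<open>The left quotient is taken at the base point S(\<tau>/2) u, which lies in D.\<close>
  define a where "a = \<tau> / 2"
  define w where "w = S a u"
  have a: "a > 0" "\<tau> = a + a" using \<open>\<tau> > 0\<close> by (auto simp: a_def)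
  have "((\<lambda>h. (S a w - S (a - h) w) /\<^sub>R h) \<longlongrightarrow> S a (G w)) (at_right 0)"
    using semigroup_left_difference_quotient[OF C0 gen bound] range a by (simp add: w_def)
  moreover have "S a w = S \<tau> u"
    using C0_semigroup_apply_add[OF C0, of a a u] a by (simp add: w_def)
  moreover have "S a (G w) = G (S \<tau> u)"
    using generator_semigroup_commute[OF C0 gen, of w a] range a \<open>S a w = S \<tau> u\<close>
    by (simp add: w_def)
  moreover have "\<forall>\<^sub>F h in at_right 0. h < a"
    using a eventually_at_right_field by blast
  then have "\<forall>\<^sub>F h in at_right 0. S (a - h) w = S (\<tau> - h) u"
    by (rule eventually_mono)
       (use a C0_semigroup_apply_add[OF C0, of "a - _" a u] in \<open>simp add: w_def\<close>)
  ultimately show "((\<lambda>h. (S \<tau> u - S (\<tau> - h) u) /\<^sub>R h) \<longlongrightarrow> G (S \<tau> u)) (at_right 0)"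
    by (auto elim!: Lim_transform_eventually elim: eventually_mono)
qed

lemma norm_blinfun_apply_le:
  assumes "norm f \<le> a" "norm x \<le> b" "a \<ge> 0"
  shows "norm (blinfun_apply f x) \<le> a * b"
  using norm_blinfun[of f x] mult_mono[OF assms(1,2) assms(3) norm_ge_zero] by linarith

lemma norm_integral_by_parts_le:
  fixes F \<Phi> :: "real \<Rightarrow> 'a::banach \<Rightarrow>\<^sub>L 'b::banach" and g g' :: "real \<Rightarrow> 'a"
  assumes "c \<le> t"
    and F_cont: "continuous_on {c..t} F"
    and \<Phi>_cont: "continuous_on {c..t} \<Phi>"
    and \<Phi>_deriv: "\<And>x. x \<in> {c<..<t} \<Longrightarrow> (\<Phi> has_vector_derivative F x) (at x)"
    and g_cont: "continuous_on {c..t} g"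
    and g_deriv: "\<And>x. x \<in> {c<..<t} \<Longrightarrow> (g has_vector_derivative g' x) (at x)"
    and \<Phi>_bound: "\<And>r. r \<in> {c..t} \<Longrightarrow> norm (\<Phi> r) \<le> \<eta>"
    and g_bound: "\<And>r. r \<in> {c..t} \<Longrightarrow> norm (g r) \<le> A"
    and g'_bound: "\<And>r. r \<in> {c..t} \<Longrightarrow> norm (g' r) \<le> B"
  shows "norm (integral {c..t} (\<lambda>r. F r (g r))) \<le> \<eta> * (2 * A + B * (t - c))"
proof -
  have \<eta>: "\<eta> \<ge> 0"
    using \<Phi>_bound[of c] \<open>c \<le> t\<close> norm_ge_zero[of "\<Phi> c"] by (simp del: norm_ge_zero)
  have "(\<lambda>r. F r (g r)) integrable_on {c..t}"
    by (intro integrable_continuous_interval bounded_bilinear.continuous_on[OF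
          bounded_bilinear_blinfun_apply F_cont g_cont])
  then have "(\<lambda>r. \<Phi> r (g' r)) integrable_on {c..t}"
    using integrable_by_parts_interior_strong[OF
        bounded_bilinear.flip[OF bounded_bilinear_blinfun_apply], of "{}" c t g \<Phi> g' F]
      \<open>c \<le> t\<close> g_cont \<Phi>_cont g_deriv \<Phi>_deriv by auto
  then obtain J where J: "((\<lambda>r. \<Phi> r (g' r)) has_integral J) {c..t}"
    by blast
  have "((\<lambda>r. F r (g r)) has_integral \<Phi> t (g t) - \<Phi> c (g c) - J) {c..t}"
    using J by (intro integration_by_parts_interior[OF bounded_bilinear_blinfun_apply \<open>c \<le> t\<close>
          \<Phi>_cont g_cont \<Phi>_deriv g_deriv]) simp_all
  then have parts: "integral {c..t} (\<lambda>r. F r (g r)) = \<Phi> t (g t) - \<Phi> c (g c) - J"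
    by (rule integral_unique)
  have boundary: "norm (\<Phi> r (g r)) \<le> \<eta> * A" if "r \<in> {c..t}" for r
    using that \<Phi>_bound g_bound \<eta> by (intro norm_blinfun_apply_le)
  have "norm J \<le> \<eta> * B * (t - c)"
  proof -
    have B: "B \<ge> 0" using g'_bound[of c] \<open>c \<le> t\<close> norm_ge_zero[of "g' c"] by (simp del: norm_ge_zero)
    have "norm (\<Phi> r (g' r)) \<le> \<eta> * B" if "r \<in> cbox c t" for r
      using that \<Phi>_bound g'_bound \<eta> by (auto intro: norm_blinfun_apply_le)
    then show ?thesis
      using has_integral_bound[of "\<eta> * B" _ J c t] J \<eta> B \<open>c \<le> t\<close> by simp
  qed
  have "norm (\<Phi> t (g t) - \<Phi> c (g c) - J) \<le> norm (\<Phi> t (g t)) + norm (\<Phi> c (g c)) + norm J"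
    by (smt (verit) norm_triangle_ineq4)
  also have "\<dots> \<le> \<eta> * A + \<eta> * A + \<eta> * B * (t - c)"
    using boundary[of t] boundary[of c] \<open>norm J \<le> \<eta> * B * (t - c)\<close> \<open>c \<le> t\<close> by (intro add_mono) auto
  finally show ?thesis
    unfolding parts by (simp add: algebra_simps)
qed

lemma integral_has_vector_derivative_at:
  fixes f :: "real \<Rightarrow> 'a::banach"
  assumes "continuous_on {a..b} f" "x \<in> {a<..<b}"
  shows "((\<lambda>r. integral {a..r} f) has_vector_derivative f x) (at x)"
proof -
  have "((\<lambda>r. integral {a..r} f) has_vector_derivative f x) (at x within {a..b})"
    using assms by (intro integral_has_vector_derivative) auto
  moreover have "at x within {a..b} = at x"
    using assms by (intro at_within_Icc_at) auto
  ultimately show ?thesis by simp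
qed

lemma semigroup_orbit_continuous_on:
  assumes "C0_semigroup S" "0 \<le> s"
  shows "continuous_on {s..t} (\<lambda>r. S (r - s) u)"
proof -
  have "continuous_on {0..} (\<lambda>r. S r u)"
    using assms unfolding C0_semigroup_def by blast
  then show ?thesis
    by (rule continuous_on_compose2) (auto intro: continuous_intros)
qed

lemma norm_integral_semigroup_orbit_far_le:
  fixes S F :: "real \<Rightarrow> 'a::banach \<Rightarrow>\<^sub>L 'a"
  assumes C0: "C0_semigroup S" and gen: "is_generator S G D"
    and S_bound: "\<forall>t\<ge>0. norm (S t) \<le> M0" and range: "\<forall>t>0. \<forall>x. S t x \<in> D"
    and GS_bound: "\<forall>t>0. \<forall>x. norm (G (S t x)) \<le> M1 / t * norm x" and "M1 \<ge> 0"
    and F_cont: "continuous_on {0..} F"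
    and F_int: "\<forall>r\<in>{c..t}. norm (integral {0..r} F) \<le> \<eta>"
    and "norm u \<le> K" "0 \<le> s" "s + \<delta> \<le> c" "c \<le> t" "\<delta> > 0"
  shows "norm (integral {c..t} (\<lambda>r. F r (S (r - s) u))) \<le> \<eta> * (2 * (M0 * K) + M1 / \<delta> * K * (t - c))"
proof (rule norm_integral_by_parts_le[OF \<open>c \<le> t\<close>])
  have "c \<ge> 0" using \<open>0 \<le> s\<close> \<open>s + \<delta> \<le> c\<close> \<open>\<delta> > 0\<close> by simp
  then show "continuous_on {c..t} F"
    by (intro continuous_on_subset[OF F_cont]) auto
  have "F integrable_on {0..t}"
    by (intro integrable_continuous_interval continuous_on_subset[OF F_cont]) auto
  then show "continuous_on {c..t} (\<lambda>r. integral {0..r} F)"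
    by (rule continuous_on_subset[OF indefinite_integral_continuous_1]) (use \<open>c \<ge> 0\<close> in auto)
  show "((\<lambda>r. integral {0..r} F) has_vector_derivative F x) (at x)" if "x \<in> {c<..<t}" for x
    using that \<open>c \<ge> 0\<close>
    by (intro integral_has_vector_derivative_at[of 0 t]) (auto intro: continuous_on_subset[OF F_cont])
  show "continuous_on {c..t} (\<lambda>r. S (r - s) u)"
    using \<open>s + \<delta> \<le> c\<close> \<open>\<delta> > 0\<close>
    by (intro continuous_on_subset[OF semigroup_orbit_continuous_on[OF C0 \<open>0 \<le> s\<close>]]) auto
  show "((\<lambda>r. S (r - s) u) has_vector_derivative G (S (x - s) u)) (at x)" if "x \<in> {c<..<t}" for x
  proof -
    have "((\<lambda>r. S r u) has_vector_derivative G (S (x - s) u)) (at (x - s))"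
      using semigroup_has_vector_derivative[OF C0 gen S_bound range] that \<open>s + \<delta> \<le> c\<close> \<open>\<delta> > 0\<close>
      by simp
    then have "((\<lambda>r. S r u) \<circ> (\<lambda>r. r - s) has_vector_derivative (1::real) *\<^sub>R G (S (x - s) u))
                (at x)"
      by (intro vector_diff_chain_at) (auto intro!: derivative_eq_intros)
    then show ?thesis
      by (simp add: o_def)
  qed
  show "norm (integral {0..r} F) \<le> \<eta>" if "r \<in> {c..t}" for r
    using that F_int by simp
  have "M0 \<ge> 0" using S_bound[rule_format, of 0] norm_ge_zero[of "S 0"] by linarith
  then show "norm (S (r - s) u) \<le> M0 * K" if "r \<in> {c..t}" for r
    using that S_bound \<open>norm u \<le> K\<close> \<open>s + \<delta> \<le> c\<close> \<open>\<delta> > 0\<close> by (auto intro: norm_blinfun_apply_le)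
  show "norm (G (S (r - s) u)) \<le> M1 / \<delta> * K" if "r \<in> {c..t}" for r
  proof -
    have "\<delta> \<le> r - s" using that \<open>s + \<delta> \<le> c\<close> by simp
    then have "norm (G (S (r - s) u)) \<le> M1 / (r - s) * norm u"
      using GS_bound \<open>\<delta> > 0\<close> by simp
    also have "\<dots> \<le> M1 / \<delta> * K"
      using \<open>\<delta> \<le> r - s\<close> \<open>\<delta> > 0\<close> \<open>M1 \<ge> 0\<close> \<open>norm u \<le> K\<close> norm_ge_zero[of u]
      by (intro mult_mono divide_left_mono) (auto simp del: norm_ge_zero)
    finally show ?thesis .
  qed
qed

lemma norm_integral_semigroup_orbit_le:
  fixes S F :: "real \<Rightarrow> 'a::banach \<Rightarrow>\<^sub>L 'a"
  assumes C0: "C0_semigroup S" and gen: "is_generator S G D"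
    and S_bound: "\<forall>t\<ge>0. norm (S t) \<le> M0" and range: "\<forall>t>0. \<forall>x. S t x \<in> D"
    and GS_bound: "\<forall>t>0. \<forall>x. norm (G (S t x)) \<le> M1 / t * norm x" and "M1 \<ge> 0"
    and F_cont: "continuous_on {0..} F" and F_bound: "\<forall>t\<ge>0. norm (F t) \<le> R"
    and F_int: "\<forall>r\<in>{0..T}. norm (integral {0..r} F) \<le> \<eta>"
    and "norm u \<le> K" "0 \<le> s" "s \<le> t" "t \<le> T" "\<delta> > 0"
  shows "norm (integral {s..t} (\<lambda>r. F r (S (r - s) u))) \<le>
           R * (M0 * K) * \<delta> + \<eta> * (2 * (M0 * K) + M1 / \<delta> * K * T)"
proof -
  define f where "f r = F r (S (r - s) u)" for r
  have M0: "M0 \<ge> 0" using S_bound[rule_format, of 0] norm_ge_zero[of "S 0"] by linarith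
  have R: "R \<ge> 0" using F_bound[rule_format, of 0] norm_ge_zero[of "F 0"] by linarith
  have K: "K \<ge> 0" using \<open>norm u \<le> K\<close> norm_ge_zero[of u] by linarith
  have "0 \<in> {0..T}" using \<open>0 \<le> s\<close> \<open>s \<le> t\<close> \<open>t \<le> T\<close> by simp
  then have \<eta>: "\<eta> \<ge> 0" using F_int norm_ge_zero[of "integral {0..0} F"] by fastforce
  have f_cont: "continuous_on {s..t} f"
    unfolding f_def using continuous_on_subset[OF F_cont] \<open>0 \<le> s\<close>
    by (intro bounded_bilinear.continuous_on[OF bounded_bilinear_blinfun_apply]
        semigroup_orbit_continuous_on[OF C0]) auto
  have near: "norm (integral {s..c} f) \<le> R * (M0 * K) * \<delta>" if "s \<le> c" "c \<le> t" "c \<le> s + \<delta>" for c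
  proof -
    have "norm (integral {s..c} f) \<le> R * (M0 * K) * (c - s)"
      using that \<open>0 \<le> s\<close> F_bound S_bound R M0 \<open>norm u \<le> K\<close>
      by (intro integral_bound continuous_on_subset[OF f_cont])
         (auto simp: f_def intro!: norm_blinfun_apply_le)
    also have "\<dots> \<le> R * (M0 * K) * \<delta>"
      using that R M0 K by (intro mult_left_mono) auto
    finally show ?thesis .
  qed
  have far_nonneg: "0 \<le> \<eta> * (2 * (M0 * K) + M1 / \<delta> * K * T)"
    using \<eta> M0 K \<open>M1 \<ge> 0\<close> \<open>\<delta> > 0\<close> \<open>s \<le> t\<close> \<open>t \<le> T\<close> \<open>0 \<le> s\<close> by simp
  show ?thesis
  proof (cases "t \<le> s + \<delta>")
    case True
    then show ?thesis using near[of t] \<open>s \<le> t\<close> far_nonneg unfolding f_def[symmetric] by simp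
  next
    case False
    define c where "c = s + \<delta>"
    have c: "s \<le> c" "c \<le> t" using False \<open>\<delta> > 0\<close> by (auto simp: c_def)
    have "norm (integral {c..t} f) \<le> \<eta> * (2 * (M0 * K) + M1 / \<delta> * K * (t - c))"
      unfolding f_def using F_int c \<open>0 \<le> s\<close> \<open>t \<le> T\<close>
      by (intro norm_integral_semigroup_orbit_far_le[OF C0 gen S_bound range GS_bound \<open>M1 \<ge> 0\<close>
            F_cont])
         (auto simp: c_def \<open>norm u \<le> K\<close> \<open>\<delta> > 0\<close>)
    also have "\<dots> \<le> \<eta> * (2 * (M0 * K) + M1 / \<delta> * K * T)"
      using c \<open>0 \<le> s\<close> \<open>t \<le> T\<close> \<eta> \<open>M1 \<ge> 0\<close> \<open>\<delta> > 0\<close> K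
      by (intro mult_left_mono add_left_mono) auto
    finally have far: "norm (integral {c..t} f) \<le> \<eta> * (2 * (M0 * K) + M1 / \<delta> * K * T)" .
    have "integral {s..t} f = integral {s..c} f + integral {c..t} f"
      using Henstock_Kurzweil_Integration.integral_combine[OF c
          integrable_continuous_interval[OF f_cont]]
      by simp
    then have "norm (integral {s..t} f) \<le> norm (integral {s..c} f) + norm (integral {c..t} f)"
      by (simp add: norm_triangle_ineq)
    then show ?thesis
      using near[of c] far c unfolding f_def[symmetric] by (simp add: c_def)
  qed
qed

theorem lemma3p3:
  fixes S0 :: "real \<Rightarrow> 'a::banach \<Rightarrow>\<^sub>L 'a"
    and A0 :: "'a \<Rightarrow> 'a" and DA0 :: "'a set"
    and M0 M1 R_F :: real
    and F :: "nat \<Rightarrow> real \<Rightarrow> ('a \<Rightarrow>\<^sub>L 'a)"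
  assumes analytic: "analytic_C0_semigroup S0 (\<lambda>x. - A0 x) DA0"
    and M0_pos: "M0 > 0" and M1_pos: "M1 > 0"
    and S0_bound: "\<forall>t\<ge>0. norm (S0 t) \<le> M0"
    and AS0_bound: "\<forall>t>0. \<forall>x. norm (A0 (S0 t x)) \<le> M1 / t * norm x"
    and F_cont: "\<forall>n\<ge>1. continuous_on {0..} (F n)"
    and R_F_pos: "R_F > 0"
    and F_bound: "\<forall>n\<ge>1. \<forall>t\<ge>0. norm (F n t) \<le> R_F"
    and F_int: "\<forall>T>0. \<forall>\<epsilon>>0. \<exists>N. \<forall>n\<ge>N. n \<ge> 1 \<longrightarrow>
                  (\<forall>t\<in>{0..T}. norm (integral {0..t} (F n)) < \<epsilon>)"
  shows "\<forall>T>0. \<forall>B. bounded B \<longrightarrow> (\<forall>\<epsilon>>0. \<exists>N. \<forall>n\<ge>N. \<forall>u\<in>B. \<forall>t\<in>{0..T}. \<forall>s\<in>{0..t}.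
           norm (integral {s..t} (\<lambda>r. F n r (S0 (r - s) u))) < \<epsilon>)"
proof (intro allI impI)
  fix T :: real and B :: "'a set" and \<epsilon> :: real
  assume "T > 0" "bounded B" "\<epsilon> > 0"
  obtain K where K: "K > 0" "\<forall>u\<in>B. norm u \<le> K"
    using \<open>bounded B\<close> bounded_pos by blast
  txt \<open>\<delta> makes the piece near s at most \<epsilon>/4; then \<eta> makes the other piece, whose bound grows
    like 1/\<delta>, at most \<epsilon>/4.\<close>
  define \<delta> where "\<delta> = \<epsilon> / (4 * (R_F * (M0 * K)))"
  define Q where "Q = 2 * (M0 * K) + M1 / \<delta> * K * T"
  define \<eta> where "\<eta> = \<epsilon> / (4 * Q)"
  have "\<delta> > 0"
    using \<open>\<epsilon> > 0\<close> R_F_pos M0_pos K by (simp add: \<delta>_def)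
  then have "Q > 0"
    using M0_pos M1_pos K \<open>T > 0\<close> unfolding Q_def by (intro add_pos_nonneg) auto
  then have "\<eta> > 0"
    using \<open>\<epsilon> > 0\<close> by (simp add: \<eta>_def)
  have "R_F * (M0 * K) * \<delta> + \<eta> * Q = \<epsilon> / 2"
    using R_F_pos M0_pos K \<open>Q > 0\<close> by (simp add: \<delta>_def \<eta>_def)
  obtain N where N: "\<forall>n\<ge>N. n \<ge> 1 \<longrightarrow> (\<forall>t\<in>{0..T}. norm (integral {0..t} (F n)) < \<eta>)"
    using F_int \<open>T > 0\<close> \<open>\<eta> > 0\<close> by blast
  have "norm (integral {s..t} (\<lambda>r. F n r (S0 (r - s) u))) \<le> R_F * (M0 * K) * \<delta> + \<eta> * Q"
    if "n \<ge> max N 1" "u \<in> B" "t \<in> {0..T}" "s \<in> {0..t}" for n u t s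
    unfolding Q_def
  proof (rule norm_integral_semigroup_orbit_le[where G = "\<lambda>x. - A0 x" and D = DA0])
    show "C0_semigroup S0" "is_generator S0 (\<lambda>x. - A0 x) DA0" "\<forall>t>0. \<forall>x. S0 t x \<in> DA0"
      using analytic unfolding analytic_C0_semigroup_def by auto
    show "\<forall>r\<in>{0..T}. norm (integral {0..r} (F n)) \<le> \<eta>"
      using N that by (auto intro: less_imp_le)
  qed (use that S0_bound AS0_bound M1_pos F_cont F_bound K \<open>\<delta> > 0\<close> in auto)
  then show "\<exists>N. \<forall>n\<ge>N. \<forall>u\<in>B. \<forall>t\<in>{0..T}. \<forall>s\<in>{0..t}.
               norm (integral {s..t} (\<lambda>r. F n r (S0 (r - s) u))) < \<epsilon>"
    using \<open>R_F * (M0 * K) * \<delta> + \<eta> * Q = \<epsilon> / 2\<close> \<open>\<epsilon> > 0\<close> by (intro exI[of _ "max N 1"]) force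
qed

end
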